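(* The functions $\Psi$ (in the correlated setting) and $\Phi^{\ge\nu-1}$ are monotone and submodular set functions on their respective domains $V\times\{0\}$ and $\hat V$.
   Context: Triggering model: for a directed graph $G=(V,E)$ and $p:E\to[0,1]$, an outcome $X=(T_v)_{v\in V}$ is obtained by having each node $v$ independently choose a subset $T_v$ of its in-neighbours $N_v$, with $T_v=S$ with probability $\prod_{u\in S}p_{uv}\prod_{u\in N_v\setminus S}(1-p_{uv})$; $\rho_X(A)$ is the set of nodes reachable from $A\subseteq V$ via arcs $\{(u,v):u\in T_v\}$. $\mathrm{BAL}(\mu,\nu)$ for integer constants $\mu\ge\nu\ge2$: instance = directed graph $G=(V,E)$, probability functions $p_1,\dots,p_\mu:E\to[0,1]$, seed sets $\mathcal I=(I_1,\dots,I_\mu)$, budget $k\ge2$. Let $\hat V=V\times[\mu]$; $\mathcal S\subseteq\hat V$ is identified with $(S_1,\dots,S_\mu)$, $S_i=\{v:(v,i)\in\mathcal S\}$. An outcome profile $\mathcal X=(X_1,\dots,X_\mu)$ consists of outcomes $X_i$ w.r.t. $p_i$ (independent in the heterogeneous setting; in the correlated setting all $p_i$ coincide and $X_1=\dots=X_\mu=X$). Campaign $i$ reaches $v$ from seeds $A_i$ if $v\in\rho_{X_i}(A_i)$. $V^j_{\mathcal X}$ is the set of nodes reached by exactly $j$ campaigns from $\mathcal I$. $\Phi^{\ge\nu-1}(\mathcal S)$ is the expected number of nodes $v\notin\bigcup_{j<\nu-1}V^j_{\mathcal X}$ reached by none or by at least $\nu$ campaigns from $(I_i\cup S_i)_i$.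 In the correlated setting, for $\mathcal T\subseteq V\times\{0\}$ with node set $T$, $\Psi(\mathcal T)=\mathbb E\big[\big|(\rho_X(T)\cap\bigcup_{j=1}^{\nu-1}V^j_{\mathcal X})\cup\bigcup_{j=\nu}^\mu V^j_{\mathcal X}\big|\big]$. *)

theory Defs
  imports Complex_Main "HOL-Library.FuncSet"
begin

definition in_nbrs :: "('a \<times> 'a) set \<Rightarrow> 'a \<Rightarrow> 'a set" where
  "in_nbrs E v = {u. (u, v) \<in> E}"

text \<open>Outcomes of the triggering model: each node v in V chooses T v, a subset of its in-neighbours.\<close>
definition outcomes :: "'a set \<Rightarrow> ('a \<times> 'a) set \<Rightarrow> ('a \<Rightarrow> 'a set) set" where
  "outcomes V E = (\<Pi>\<^sub>E v\<in>V. Pow (in_nbrs E v))"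

definition outcome_prob :: "'a set \<Rightarrow> ('a \<times> 'a) set \<Rightarrow> ('a \<times> 'a \<Rightarrow> real) \<Rightarrow> ('a \<Rightarrow> 'a set) \<Rightarrow> real" where
  "outcome_prob V E p X =
     (\<Prod>v\<in>V. (\<Prod>u\<in>X v. p (u, v)) * (\<Prod>u\<in>in_nbrs E v - X v. 1 - p (u, v)))"

definition live_arcs :: "'a set \<Rightarrow> ('a \<Rightarrow> 'a set) \<Rightarrow> ('a \<times> 'a) set" where
  "live_arcs V X = {(u, v). v \<in> V \<and> u \<in> X v}"

definition reach :: "'a set \<Rightarrow> ('a \<Rightarrow> 'a set) \<Rightarrow> 'a set \<Rightarrow> 'a set" where
  "reach V X A = {w. \<exists>a\<in>A. (a, w) \<in> (live_arcs V X)\<^sup>*}"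

definition num_reaching :: "'a set \<Rightarrow> nat \<Rightarrow> (nat \<Rightarrow> 'a \<Rightarrow> 'a set) \<Rightarrow> (nat \<Rightarrow> 'a set) \<Rightarrow> 'a \<Rightarrow> nat" where
  "num_reaching V mu XX A v = card {i \<in> {1..mu}. v \<in> reach V (XX i) (A i)}"

definition exactly_reached :: "'a set \<Rightarrow> nat \<Rightarrow> (nat \<Rightarrow> 'a \<Rightarrow> 'a set) \<Rightarrow> (nat \<Rightarrow> 'a set) \<Rightarrow> nat \<Rightarrow> 'a set" where
  "exactly_reached V mu XX I j = {v \<in> V. num_reaching V mu XX I v = j}"

definition slice :: "('a \<times> nat) set \<Rightarrow> nat \<Rightarrow> 'a set" where
  "slice S i = {v. (v, i) \<in> S}"

definition phi_count :: "'a set \<Rightarrow> nat \<Rightarrow> nat \<Rightarrow> (nat \<Rightarrow> 'a set) \<Rightarrow> (nat \<Rightarrow> 'a \<Rightarrow> 'a set) \<Rightarrow> ('a \<times> nat) set \<Rightarrow> nat" where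
  "phi_count V mu nu I XX S =
     card {v \<in> V. v \<notin> (\<Union>j<nu - 1. exactly_reached V mu XX I j) \<and>
                 (num_reaching V mu XX (\<lambda>i. I i \<union> slice S i) v = 0 \<or>
                  nu \<le> num_reaching V mu XX (\<lambda>i. I i \<union> slice S i) v)}"

definition Phi_het :: "'a set \<Rightarrow> ('a \<times> 'a) set \<Rightarrow> nat \<Rightarrow> nat \<Rightarrow> (nat \<Rightarrow> 'a \<times> 'a \<Rightarrow> real) \<Rightarrow> (nat \<Rightarrow> 'a set) \<Rightarrow> ('a \<times> nat) set \<Rightarrow> real" where
  "Phi_het V E mu nu p I S =
     (\<Sum>XX\<in>(\<Pi>\<^sub>E i\<in>{1..mu}. outcomes V E).
        (\<Prod>i\<in>{1..mu}. outcome_prob V E (p i) (XX i)) * real (phi_count V mu nu I XX S))"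

definition Phi_corr :: "'a set \<Rightarrow> ('a \<times> 'a) set \<Rightarrow> nat \<Rightarrow> nat \<Rightarrow> ('a \<times> 'a \<Rightarrow> real) \<Rightarrow> (nat \<Rightarrow> 'a set) \<Rightarrow> ('a \<times> nat) set \<Rightarrow> real" where
  "Phi_corr V E mu nu p I S =
     (\<Sum>X\<in>outcomes V E. outcome_prob V E p X * real (phi_count V mu nu I (\<lambda>i. X) S))"

definition Psi :: "'a set \<Rightarrow> ('a \<times> 'a) set \<Rightarrow> nat \<Rightarrow> nat \<Rightarrow> ('a \<times> 'a \<Rightarrow> real) \<Rightarrow> (nat \<Rightarrow> 'a set) \<Rightarrow> ('a \<times> nat) set \<Rightarrow> real" where
  "Psi V E mu nu p I T =
     (\<Sum>X\<in>outcomes V E. outcome_prob V E p X *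
        real (card ((reach V X (fst ` T) \<inter> (\<Union>j\<in>{1..nu - 1}. exactly_reached V mu (\<lambda>i. X) I j))
                    \<union> (\<Union>j\<in>{nu..mu}. exactly_reached V mu (\<lambda>i. X) I j))))"

definition monotone_setfun :: "'b set \<Rightarrow> ('b set \<Rightarrow> real) \<Rightarrow> bool" where
  "monotone_setfun D f \<longleftrightarrow> (\<forall>A B. A \<subseteq> B \<and> B \<subseteq> D \<longrightarrow> f A \<le> f B)"

definition submodular_setfun :: "'b set \<Rightarrow> ('b set \<Rightarrow> real) \<Rightarrow> bool" where
  "submodular_setfun D f \<longleftrightarrow>
     (\<forall>A B x. A \<subseteq> B \<and> B \<subseteq> D \<and> x \<in> D - B \<longrightarrow> f (insert x B) - f B \<le> f (insert x A) - f A)"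

end

theory Submission
  imports Defs
begin

text \<open>For a fixed outcome profile each counted quantity is a coverage function
  \<open>A \<mapsto> card (C \<union> (\<Union>a\<in>A. F a))\<close>. For \<open>\<Psi>\<close>, \<open>C\<close> is the set of nodes reached by at least
  \<open>\<nu>\<close> campaigns and \<open>F a\<close> the set of nodes reached by between 1 and \<open>\<nu> - 1\<close> campaigns that
  the seed \<open>a\<close> reaches. For \<open>\<Phi>\<close>, a node is counted iff it is already reached by at least \<open>\<nu>\<close>
  campaigns, or by exactly \<open>\<nu> - 1\<close> campaigns and some new seed \<open>(w, i)\<close> lets a further
  campaign \<open>i\<close> reach it. Coverage functions are monotone and submodular, and both properties
  survive nonnegative weighted sums, i.e. expectations over outcomes.\<close>

definition coverage :: "'b set \<Rightarrow> ('c \<Rightarrow> 'b set) \<Rightarrow> 'c set \<Rightarrow> real" where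
  "coverage C F A = real (card (C \<union> \<Union>(F ` A)))"

lemma coverage_insert:
  assumes "finite U" "C \<subseteq> U" "\<And>a. F a \<subseteq> U"
  shows "coverage C F (insert y A) = coverage C F A + real (card (F y - (C \<union> \<Union>(F ` A))))"
proof -
  have "finite (C \<union> \<Union>(F ` A))" "finite (F y - (C \<union> \<Union>(F ` A)))"
    using assms by (meson UN_least le_sup_iff rev_finite_subset finite_Diff)+
  then have "card ((C \<union> \<Union>(F ` A)) \<union> (F y - (C \<union> \<Union>(F ` A))))
      = card (C \<union> \<Union>(F ` A)) + card (F y - (C \<union> \<Union>(F ` A)))"
    by (intro card_Un_disjoint) auto
  moreover have "C \<union> \<Union>(F ` insert y A) = (C \<union> \<Union>(F ` A)) \<union> (F y - (C \<union> \<Union>(F ` A)))"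
    by blast
  ultimately show ?thesis
    unfolding coverage_def by simp
qed

lemma coverage_monotone:
  assumes "finite U" "C \<subseteq> U" "\<And>a. F a \<subseteq> U"
  shows "monotone_setfun D (coverage C F)"
  unfolding monotone_setfun_def coverage_def
proof (intro allI impI)
  fix A B assume "A \<subseteq> B \<and> B \<subseteq> D"
  moreover have "finite (C \<union> \<Union>(F ` B))"
    using assms by (meson UN_least le_sup_iff rev_finite_subset)
  ultimately show "real (card (C \<union> \<Union>(F ` A))) \<le> real (card (C \<union> \<Union>(F ` B)))"
    by (intro of_nat_mono card_mono) auto
qed

lemma coverage_submodular:
  assumes "finite U" "C \<subseteq> U" "\<And>a. F a \<subseteq> U"
  shows "submodular_setfun D (coverage C F)"
  unfolding submodular_setfun_def
proof (intro allI impI)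
  fix A B y assume "A \<subseteq> B \<and> B \<subseteq> D \<and> y \<in> D - B"
  then have "F y - (C \<union> \<Union>(F ` B)) \<subseteq> F y - (C \<union> \<Union>(F ` A))" by blast
  moreover have "finite (F y)" using assms by (meson rev_finite_subset)
  ultimately have "card (F y - (C \<union> \<Union>(F ` B))) \<le> card (F y - (C \<union> \<Union>(F ` A)))"
    by (intro card_mono) auto
  then show "coverage C F (insert y B) - coverage C F B \<le> coverage C F (insert y A) - coverage C F A"
    by (simp add: coverage_insert[OF assms])
qed

lemma monotone_setfun_weighted_sum:
  assumes "\<And>x. x \<in> \<Omega> \<Longrightarrow> 0 \<le> w x" "\<And>x. x \<in> \<Omega> \<Longrightarrow> monotone_setfun D (f x)"
  shows "monotone_setfun D (\<lambda>A. \<Sum>x\<in>\<Omega>. w x * f x A)"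
  using assms unfolding monotone_setfun_def by (blast intro: sum_mono mult_left_mono)

lemma submodular_setfun_weighted_sum:
  assumes "\<And>x. x \<in> \<Omega> \<Longrightarrow> 0 \<le> w x" "\<And>x. x \<in> \<Omega> \<Longrightarrow> submodular_setfun D (f x)"
  shows "submodular_setfun D (\<lambda>A. \<Sum>x\<in>\<Omega>. w x * f x A)"
  unfolding submodular_setfun_def
proof (intro allI impI)
  fix A B y assume hyp: "A \<subseteq> B \<and> B \<subseteq> D \<and> y \<in> D - B"
  have "(\<Sum>x\<in>\<Omega>. w x * f x (insert y B)) - (\<Sum>x\<in>\<Omega>. w x * f x B)
      = (\<Sum>x\<in>\<Omega>. w x * (f x (insert y B) - f x B))"
    by (simp add: sum_subtractf right_diff_distrib)
  also have "\<dots> \<le> (\<Sum>x\<in>\<Omega>. w x * (f x (insert y A) - f x A))"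
    using assms hyp unfolding submodular_setfun_def by (blast intro: sum_mono mult_left_mono)
  also have "\<dots> = (\<Sum>x\<in>\<Omega>. w x * f x (insert y A)) - (\<Sum>x\<in>\<Omega>. w x * f x A)"
    by (simp add: sum_subtractf right_diff_distrib)
  finally show "(\<Sum>x\<in>\<Omega>. w x * f x (insert y B)) - (\<Sum>x\<in>\<Omega>. w x * f x B)
      \<le> (\<Sum>x\<in>\<Omega>. w x * f x (insert y A)) - (\<Sum>x\<in>\<Omega>. w x * f x A)" .
qed

lemma outcome_prob_nonneg:
  assumes "\<forall>e\<in>E. 0 \<le> p e \<and> p e \<le> 1" "X \<in> outcomes V E"
  shows "0 \<le> outcome_prob V E p X"
  unfolding outcome_prob_def
proof (rule prod_nonneg, rule mult_nonneg_nonneg)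
  fix v assume "v \<in> V"
  then have "X v \<subseteq> in_nbrs E v" using assms(2) unfolding outcomes_def by auto
  then show "0 \<le> (\<Prod>u\<in>X v. p (u, v))"
    using assms(1) by (intro prod_nonneg) (auto simp: in_nbrs_def)
  show "0 \<le> (\<Prod>u\<in>in_nbrs E v - X v. 1 - p (u, v))"
    using assms(1) by (intro prod_nonneg) (auto simp: in_nbrs_def)
qed

lemma reach_Un: "reach V X (A \<union> B) = reach V X A \<union> reach V X B"
  unfolding reach_def by blast

lemma reach_eq_UN_singleton: "reach V X A = (\<Union>a\<in>A. reach V X {a})"
  unfolding reach_def by blast

lemma mem_reach_slice_iff: "v \<in> reach V X (slice S i) \<longleftrightarrow> (\<exists>w. (w, i) \<in> S \<and> v \<in> reach V X {w})"
  unfolding reach_def slice_def by blast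

lemma num_reaching_Un_slice_ge:
  "num_reaching V mu XX I v \<le> num_reaching V mu XX (\<lambda>i. I i \<union> slice S i) v"
  unfolding num_reaching_def by (intro card_mono) (auto simp: reach_Un)

lemma num_reaching_Un_slice_gt_iff:
  "num_reaching V mu XX I v < num_reaching V mu XX (\<lambda>i. I i \<union> slice S i) v \<longleftrightarrow>
     (\<exists>(w, i)\<in>S. i \<in> {1..mu} \<and> v \<notin> reach V (XX i) (I i) \<and> v \<in> reach V (XX i) {w})"
proof -
  define A where "A = {i \<in> {1..mu}. v \<in> reach V (XX i) (I i)}"
  define B where "B = {i \<in> {1..mu}. v \<in> reach V (XX i) (I i \<union> slice S i)}"
  have "A \<subseteq> B" "finite B" unfolding A_def B_def by (auto simp: reach_Un)
  then have "card A < card B \<longleftrightarrow> B - A \<noteq> {}"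
    using psubset_card_mono[of B A] by auto
  also have "\<dots> \<longleftrightarrow> (\<exists>(w, i)\<in>S. i \<in> {1..mu} \<and> v \<notin> reach V (XX i) (I i) \<and> v \<in> reach V (XX i) {w})"
    unfolding A_def B_def by (auto simp: reach_Un mem_reach_slice_iff)
  finally show ?thesis unfolding num_reaching_def A_def B_def .
qed

definition saturated_nodes :: "'a set \<Rightarrow> nat \<Rightarrow> nat \<Rightarrow> (nat \<Rightarrow> 'a set) \<Rightarrow> (nat \<Rightarrow> 'a \<Rightarrow> 'a set) \<Rightarrow> 'a set" where
  "saturated_nodes V mu nu I XX = {v \<in> V. nu \<le> num_reaching V mu XX I v}"

definition pivotal_nodes :: "'a set \<Rightarrow> nat \<Rightarrow> nat \<Rightarrow> (nat \<Rightarrow> 'a set) \<Rightarrow> (nat \<Rightarrow> 'a \<Rightarrow> 'a set) \<Rightarrow> 'a \<times> nat \<Rightarrow> 'a set" where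
  "pivotal_nodes V mu nu I XX = (\<lambda>(w, i). {v \<in> V. num_reaching V mu XX I v = nu - 1 \<and> i \<in> {1..mu} \<and>
      v \<notin> reach V (XX i) (I i) \<and> v \<in> reach V (XX i) {w}})"

lemma phi_count_eq_coverage:
  assumes "2 \<le> nu"
  shows "real (phi_count V mu nu I XX S) = coverage (saturated_nodes V mu nu I XX) (pivotal_nodes V mu nu I XX) S"
proof -
  have "v \<notin> (\<Union>j<nu - 1. exactly_reached V mu XX I j) \<and>
          (num_reaching V mu XX (\<lambda>i. I i \<union> slice S i) v = 0 \<or>
           nu \<le> num_reaching V mu XX (\<lambda>i. I i \<union> slice S i) v)
      \<longleftrightarrow> nu \<le> num_reaching V mu XX I v \<or>
          (num_reaching V mu XX I v = nu - 1 \<and>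
           num_reaching V mu XX I v < num_reaching V mu XX (\<lambda>i. I i \<union> slice S i) v)"
    if "v \<in> V" for v
    \<comment> \<open>\<open>\<nu> - 1 \<ge> 1\<close> seed campaigns already reach \<open>v\<close>, so the case "reached by none" never occurs.\<close>
    using that assms num_reaching_Un_slice_ge[of V mu XX I v S]
    unfolding exactly_reached_def by auto
  then have "{v \<in> V. v \<notin> (\<Union>j<nu - 1. exactly_reached V mu XX I j) \<and>
                 (num_reaching V mu XX (\<lambda>i. I i \<union> slice S i) v = 0 \<or>
                  nu \<le> num_reaching V mu XX (\<lambda>i. I i \<union> slice S i) v)}
      = saturated_nodes V mu nu I XX \<union> \<Union>(pivotal_nodes V mu nu I XX ` S)"
    unfolding saturated_nodes_def pivotal_nodes_def num_reaching_Un_slice_gt_iff by auto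
  then show ?thesis unfolding phi_count_def coverage_def by simp
qed

lemma phi_count_monotone_submodular:
  assumes "finite V" "2 \<le> nu"
  shows "monotone_setfun D (\<lambda>S. real (phi_count V mu nu I XX S)) \<and>
         submodular_setfun D (\<lambda>S. real (phi_count V mu nu I XX S))"
proof -
  have "saturated_nodes V mu nu I XX \<subseteq> V" "pivotal_nodes V mu nu I XX a \<subseteq> V" for a
    unfolding saturated_nodes_def pivotal_nodes_def by (auto split: prod.splits)
  then show ?thesis
    unfolding phi_count_eq_coverage[OF assms(2)]
    using coverage_monotone coverage_submodular assms(1) by metis
qed

lemma card_reach_Int_Un_eq_coverage:
  "real (card ((reach V X (fst ` T) \<inter> M) \<union> N)) = coverage N (\<lambda>a. reach V X {fst a} \<inter> M) T"
proof -
  have "(reach V X (fst ` T) \<inter> M) \<union> N = N \<union> \<Union>((\<lambda>a. reach V X {fst a} \<inter> M) ` T)"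
    by (subst reach_eq_UN_singleton) blast
  then show ?thesis unfolding coverage_def by simp
qed

lemma Psi_monotone_submodular:
  assumes "finite V" "\<forall>e\<in>E. 0 \<le> p e \<and> p e \<le> 1"
  shows "monotone_setfun D (Psi V E mu nu p I) \<and> submodular_setfun D (Psi V E mu nu p I)"
proof -
  define M where "M X = (\<Union>j\<in>{1..nu - 1}. exactly_reached V mu (\<lambda>i. X) I j)" for X
  define N where "N X = (\<Union>j\<in>{nu..mu}. exactly_reached V mu (\<lambda>i. X) I j)" for X
  have "N X \<subseteq> V" "reach V X {fst a} \<inter> M X \<subseteq> V" for X a
    unfolding M_def N_def exactly_reached_def by blast+
  then have "monotone_setfun D (coverage (N X) (\<lambda>a. reach V X {fst a} \<inter> M X))"
    "submodular_setfun D (coverage (N X) (\<lambda>a. reach V X {fst a} \<inter> M X))" for X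
    using coverage_monotone coverage_submodular assms(1) by metis+
  moreover have "Psi V E mu nu p I = (\<lambda>T. \<Sum>X\<in>outcomes V E.
      outcome_prob V E p X * coverage (N X) (\<lambda>a. reach V X {fst a} \<inter> M X) T)"
    by (simp add: fun_eq_iff Psi_def card_reach_Int_Un_eq_coverage M_def N_def)
  ultimately show ?thesis
    using outcome_prob_nonneg[OF assms(2)]
    by (simp add: monotone_setfun_weighted_sum submodular_setfun_weighted_sum)
qed

lemma Phi_het_monotone_submodular:
  assumes "finite V" "2 \<le> nu" "\<forall>i\<in>{1..mu}. \<forall>e\<in>E. 0 \<le> p i e \<and> p i e \<le> 1"
  shows "monotone_setfun D (Phi_het V E mu nu p I) \<and> submodular_setfun D (Phi_het V E mu nu p I)"
proof -
  have "0 \<le> (\<Prod>i\<in>{1..mu}. outcome_prob V E (p i) (XX i))"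
    if "XX \<in> (\<Pi>\<^sub>E i\<in>{1..mu}. outcomes V E)" for XX
    using that assms(3) by (intro prod_nonneg outcome_prob_nonneg) auto
  then show ?thesis
    unfolding Phi_het_def
    using phi_count_monotone_submodular[OF assms(1,2)]
    by (simp add: monotone_setfun_weighted_sum submodular_setfun_weighted_sum)
qed

lemma Phi_corr_monotone_submodular:
  assumes "finite V" "2 \<le> nu" "\<forall>e\<in>E. 0 \<le> p e \<and> p e \<le> 1"
  shows "monotone_setfun D (Phi_corr V E mu nu p I) \<and> submodular_setfun D (Phi_corr V E mu nu p I)"
  unfolding Phi_corr_def
  using phi_count_monotone_submodular[OF assms(1,2)] outcome_prob_nonneg[OF assms(3)]
  by (simp add: monotone_setfun_weighted_sum submodular_setfun_weighted_sum)

theorem mainTheorem15: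
  fixes V :: "'a set" and E :: "('a \<times> 'a) set" and mu nu :: nat
    and ph :: "nat \<Rightarrow> 'a \<times> 'a \<Rightarrow> real" and pc :: "'a \<times> 'a \<Rightarrow> real"
    and I :: "nat \<Rightarrow> 'a set"
  assumes "finite V" and "E \<subseteq> V \<times> V"
    and "2 \<le> nu" and "nu \<le> mu"
    and "\<forall>i\<in>{1..mu}. I i \<subseteq> V"
    and "\<forall>i\<in>{1..mu}. \<forall>e\<in>E. 0 \<le> ph i e \<and> ph i e \<le> 1"
    and "\<forall>e\<in>E. 0 \<le> pc e \<and> pc e \<le> 1"
  shows "monotone_setfun (V \<times> {0}) (Psi V E mu nu pc I) \<and>
         submodular_setfun (V \<times> {0}) (Psi V E mu nu pc I) \<and>
         monotone_setfun (V \<times> {1..mu}) (Phi_het V E mu nu ph I) \<and>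
         submodular_setfun (V \<times> {1..mu}) (Phi_het V E mu nu ph I) \<and>
         monotone_setfun (V \<times> {1..mu}) (Phi_corr V E mu nu pc I) \<and>
         submodular_setfun (V \<times> {1..mu}) (Phi_corr V E mu nu pc I)"
  using Psi_monotone_submodular[OF assms(1,7)]
    Phi_het_monotone_submodular[OF assms(1,3,6)]
    Phi_corr_monotone_submodular[OF assms(1,3,7)]
  by blast

end
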